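(* Let $N\to\infty$, $p=p(N)$ with $p(1-p)N\to\infty$, and $S=S(N)$, $h=h(N)$ such that $N-S$ and $N+S$ are nonnegative integers, $2(2p(1-p)N)^{1/2}<h=o((p(1-p)N)^{2/3})$ and $hS=o(N(p(1-p)N)^{1/2})$. Let $X_1\sim B(N-S,p)$ and $X_2\sim B(N+S,1-p)$ be independent with means $\mu_1,\mu_2$. Then $$\mathbb{P}(X_1+X_2\ge\mu_1+\mu_2+h)>\frac{\sqrt{2p(1-p)N}}{2\pi h}\exp\!\left(-\frac{h^2}{4p(1-p)N}-4-o(1)\right),$$ where $o(1)\to0$ as $N\to\infty$.
   Context: $B(n,p)$ denotes a binomial random variable with parameters $n$ and $p$. *)

theory Defs
  imports "HOL-Probability.Probability" "HOL-Library.Landau_Symbols"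
begin

definition binom_sum_tail :: "nat \<Rightarrow> nat \<Rightarrow> real \<Rightarrow> real \<Rightarrow> real" where
  "binom_sum_tail n1 n2 p t =
     measure_pmf.prob (pair_pmf (binomial_pmf n1 p) (binomial_pmf n2 (1 - p)))
       {(x1, x2). real x1 + real x2 \<ge> t}"

end

theory Submission
  imports Defs
begin

text \<open>
  Let \<open>\<sigma>\<^sup>2 = n p (1 - p)\<close>. By Chebyshev's inequality some point within \<open>2\<sigma>\<close> of the mean
  of \<open>B(n, p)\<close> carries mass at least \<open>(3/4)/(4\<sigma> + 1)\<close>. Within distance \<open>R\<close> of the mean the
  ratio of consecutive binomial probabilities is \<open>exp (-(k - n p + 1/2)/\<sigma>\<^sup>2)\<close> up to a factor
  \<open>exp (\<plusminus>(1/(2\<sigma>\<^sup>2) + 2(R + 1)\<^sup>2/\<sigma>\<^sup>4))\<close>, so walking away from that point gives the local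
  Gaussian lower bound \<open>pmf k \<ge> (3/4)/(4\<sigma> + 1) \<cdot> exp (-(k - n p)\<^sup>2/(2\<sigma>\<^sup>2) - O(R\<^sup>3/\<sigma>\<^sup>4))\<close>;
  for \<open>R = 2h\<close> the hypothesis \<open>h = o(\<sigma>\<^sup>4\<^sup>/\<^sup>3)\<close> keeps the error term bounded.

  With \<open>V = \<sigma>\<^sub>1\<^sup>2 + \<sigma>\<^sub>2\<^sup>2\<close>, the event \<open>X\<^sub>1 + X\<^sub>2 \<ge> \<mu>\<^sub>1 + \<mu>\<^sub>2 + h\<close> contains a box of about
  \<open>\<sigma>\<^sub>1 \<cdot> V/h\<close> points next to the most likely split of the excess \<open>h\<close>, namely proportionally to
  the variances; on it the two Gaussian exponents add up to \<open>h\<^sup>2/(2V) + O(1)\<close>. Counting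
  gives the bound with the constant \<open>4\<close> itself for all large \<open>N\<close>, so any positive null
  sequence serves as the \<open>o(1)\<close> term.
\<close>

definition binomial_expect :: "nat \<Rightarrow> real \<Rightarrow> (nat \<Rightarrow> real) \<Rightarrow> real" where
  "binomial_expect n p g = (\<Sum>k\<le>n. real (n choose k) * p ^ k * (1 - p) ^ (n - k) * g k)"

lemma binomial_expect_Suc:
  "binomial_expect (Suc n) p g = p * binomial_expect n p (\<lambda>k. g (Suc k)) + (1 - p) * binomial_expect n p g"
proof -
  let ?q = "1 - p"
  have "binomial_expect (Suc n) p g
      = ?q ^ Suc n * g 0 + (\<Sum>j\<le>n. real (Suc n choose Suc j) * p ^ Suc j * ?q ^ (n - j) * g (Suc j))"
    unfolding binomial_expect_def by (subst sum.atMost_Suc_shift) simp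
  also have "\<dots> = (\<Sum>j\<le>n. real (n choose j) * p ^ Suc j * ?q ^ (n - j) * g (Suc j))
      + (?q ^ Suc n * g 0 + (\<Sum>j<n. real (n choose Suc j) * p ^ Suc j * ?q ^ (n - j) * g (Suc j)))"
    by (simp add: sum.distrib algebra_simps lessThan_Suc_atMost[symmetric])
  also have "(\<Sum>j\<le>n. real (n choose j) * p ^ Suc j * ?q ^ (n - j) * g (Suc j))
      = p * binomial_expect n p (\<lambda>k. g (Suc k))"
    unfolding binomial_expect_def by (simp add: sum_distrib_left algebra_simps)
  also have "?q ^ Suc n * g 0 + (\<Sum>j<n. real (n choose Suc j) * p ^ Suc j * ?q ^ (n - j) * g (Suc j))
      = ?q * binomial_expect n p g"
  proof -
    have "(\<Sum>j<n. real (n choose Suc j) * p ^ Suc j * ?q ^ (n - j) * g (Suc j))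
        = ?q * (\<Sum>j<n. real (n choose Suc j) * p ^ Suc j * ?q ^ (n - Suc j) * g (Suc j))"
      unfolding sum_distrib_left by (rule sum.cong) (auto simp: Suc_diff_Suc[symmetric])
    moreover have "binomial_expect n p g
        = ?q ^ n * g 0 + (\<Sum>j<n. real (n choose Suc j) * p ^ Suc j * ?q ^ (n - Suc j) * g (Suc j))"
      unfolding binomial_expect_def lessThan_Suc_atMost[symmetric] sum.lessThan_Suc_shift by simp
    ultimately show ?thesis by (simp add: algebra_simps)
  qed
  finally show ?thesis .
qed

lemma binomial_expect_add:
  "binomial_expect n p (\<lambda>k. f k + g k) = binomial_expect n p f + binomial_expect n p g"
  unfolding binomial_expect_def by (simp add: sum.distrib algebra_simps)

lemma binomial_expect_cmult: "binomial_expect n p (\<lambda>k. c * f k) = c * binomial_expect n p f"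
  unfolding binomial_expect_def by (simp add: sum_distrib_left algebra_simps)

lemma binomial_expect_const: "binomial_expect n p (\<lambda>k. c) = c"
proof -
  have "binomial_expect n p (\<lambda>k. c) = c * (\<Sum>k\<le>n. real (n choose k) * p ^ k * (1 - p) ^ (n - k))"
    unfolding binomial_expect_def by (simp add: sum_distrib_left algebra_simps)
  also have "(\<Sum>k\<le>n. real (n choose k) * p ^ k * (1 - p) ^ (n - k)) = (p + (1 - p)) ^ n"
    by (subst binomial_ring) (simp add: atLeast0AtMost)
  finally show ?thesis by simp
qed

lemma binomial_expect_mean: "binomial_expect n p (\<lambda>k. real k) = n * p"
proof (induction n)
  case (Suc n)
  have "binomial_expect (Suc n) p (\<lambda>k. real k)
      = p * binomial_expect n p (\<lambda>k. 1 + real k) + (1 - p) * binomial_expect n p (\<lambda>k. real k)"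
    by (subst binomial_expect_Suc) simp
  then show ?case by (simp add: binomial_expect_add binomial_expect_const Suc algebra_simps)
qed (simp add: binomial_expect_def)

lemma binomial_expect_square: "binomial_expect n p (\<lambda>k. real k ^ 2) = n * p * (1 - p) + (n * p) ^ 2"
proof (induction n)
  case (Suc n)
  have "binomial_expect (Suc n) p (\<lambda>k. real k ^ 2)
      = p * binomial_expect n p (\<lambda>k. real k ^ 2 + (2 * real k + 1))
        + (1 - p) * binomial_expect n p (\<lambda>k. real k ^ 2)"
    by (subst binomial_expect_Suc) (simp add: power2_eq_square algebra_simps)
  also have "binomial_expect n p (\<lambda>k. real k ^ 2 + (2 * real k + 1))
      = n * p * (1 - p) + (n * p) ^ 2 + (2 * (n * p) + 1)"
    by (simp only: binomial_expect_add binomial_expect_cmult binomial_expect_const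
        binomial_expect_mean Suc)
  also have "binomial_expect n p (\<lambda>k. real k ^ 2) = n * p * (1 - p) + (n * p) ^ 2"
    by (rule Suc)
  finally show ?case by (simp add: power2_eq_square algebra_simps)
qed (simp add: binomial_expect_def)

lemma binomial_expect_variance: "binomial_expect n p (\<lambda>k. (real k - n * p) ^ 2) = n * p * (1 - p)"
proof -
  have "binomial_expect n p (\<lambda>k. (real k - n * p) ^ 2)
      = binomial_expect n p (\<lambda>k. real k ^ 2 + ((- 2 * (n * p)) * real k + (n * p) ^ 2))"
    by (simp add: power2_eq_square algebra_simps)
  also have "\<dots> = n * p * (1 - p) + (n * p) ^ 2 + ((- 2 * (n * p)) * (n * p) + (n * p) ^ 2)"
    by (simp only: binomial_expect_add binomial_expect_cmult binomial_expect_const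
        binomial_expect_mean binomial_expect_square)
  finally show ?thesis by (simp add: power2_eq_square algebra_simps)
qed

lemma sum_pmf_binomial_eq_binomial_expect:
  assumes "0 \<le> p" "p \<le> 1"
  shows "(\<Sum>k\<le>n. pmf (binomial_pmf n p) k * g k) = binomial_expect n p g"
  using assms unfolding binomial_expect_def by simp

lemma binomial_chebyshev:
  assumes "0 \<le> p" "p \<le> 1" "0 < c"
  shows "(\<Sum>k\<in>{k\<in>{..n}. c < \<bar>real k - n * p\<bar>}. pmf (binomial_pmf n p) k) \<le> n * p * (1 - p) / c\<^sup>2"
proof -
  let ?b = "pmf (binomial_pmf n p)"
  have "(\<Sum>k\<in>{k\<in>{..n}. c < \<bar>real k - n * p\<bar>}. ?b k)
      \<le> (\<Sum>k\<in>{k\<in>{..n}. c < \<bar>real k - n * p\<bar>}. ?b k * ((real k - n * p)\<^sup>2 / c\<^sup>2))"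
  proof (rule sum_mono)
    fix k assume "k \<in> {k\<in>{..n}. c < \<bar>real k - n * p\<bar>}"
    then have "c\<^sup>2 \<le> \<bar>real k - n * p\<bar>\<^sup>2" using assms(3) by (intro power_mono) auto
    then have "1 \<le> (real k - n * p)\<^sup>2 / c\<^sup>2" using assms(3) by simp
    from mult_left_mono[OF this pmf_nonneg] show "?b k \<le> ?b k * ((real k - n * p)\<^sup>2 / c\<^sup>2)" by simp
  qed
  also have "\<dots> \<le> (\<Sum>k\<le>n. ?b k * ((real k - n * p)\<^sup>2 / c\<^sup>2))"
    by (intro sum_mono2) auto
  also have "\<dots> = (\<Sum>k\<le>n. ?b k * (real k - n * p)\<^sup>2) / c\<^sup>2"
    by (simp add: sum_divide_distrib)
  also have "\<dots> = n * p * (1 - p) / c\<^sup>2"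
    using sum_pmf_binomial_eq_binomial_expect[OF assms(1,2)] binomial_expect_variance by simp
  finally show ?thesis .
qed

lemma card_nat_in_real_interval_le:
  fixes lo hi :: real
  assumes "lo \<le> hi"
  shows "real (card {k::nat. lo \<le> real k \<and> real k \<le> hi}) \<le> hi - lo + 1"
proof (cases "hi < 0")
  case False
  have "{k::nat. lo \<le> real k \<and> real k \<le> hi} \<subseteq> {nat \<lceil>lo\<rceil> .. nat \<lfloor>hi\<rfloor>}"
    by (auto simp: le_nat_iff nat_le_iff ceiling_le_iff le_floor_iff)
  then have "card {k::nat. lo \<le> real k \<and> real k \<le> hi} \<le> nat \<lfloor>hi\<rfloor> + 1 - nat \<lceil>lo\<rceil>"
    using card_mono[of "{nat \<lceil>lo\<rceil> .. nat \<lfloor>hi\<rfloor>}"] by simp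
  moreover have "real (nat \<lfloor>hi\<rfloor> + 1 - nat \<lceil>lo\<rceil>) \<le> hi - lo + 1"
    using False assms by (cases "lo < 0") (simp_all add: of_nat_diff, linarith+)
  ultimately show ?thesis by (meson of_nat_le_iff order_trans)
qed (use assms in \<open>auto intro: ccontr\<close>)

lemma card_nat_in_real_interval_ge:
  fixes lo hi :: real
  assumes "0 \<le> lo" "lo \<le> hi"
  shows "hi - lo - 1 \<le> real (card {k::nat. lo \<le> real k \<and> real k \<le> hi})"
proof -
  have "{k::nat. lo \<le> real k \<and> real k \<le> hi} = {nat \<lceil>lo\<rceil> .. nat \<lfloor>hi\<rfloor>}"
    using assms by (auto simp: le_nat_iff nat_le_iff ceiling_le_iff le_floor_iff)
  then show ?thesis using assms by (simp add: of_nat_diff) linarith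
qed

lemma finite_nat_in_real_interval: "finite {k::nat. lo \<le> real k \<and> real k \<le> hi}"
proof (rule finite_subset)
  show "{k::nat. lo \<le> real k \<and> real k \<le> hi} \<subseteq> {..nat \<lceil>hi\<rceil>}"
  proof
    fix k assume "k \<in> {k::nat. lo \<le> real k \<and> real k \<le> hi}"
    then have "real k \<le> real (nat \<lceil>hi\<rceil>)" using real_nat_ceiling_ge[of hi] by simp linarith
    then show "k \<in> {..nat \<lceil>hi\<rceil>}" by simp
  qed
qed simp

lemma binomial_pmf_heavy_near_mean:
  assumes p: "0 < p" "p < 1" and vr: "vr = n * p * (1 - p)" "0 < vr"
  shows "\<exists>m. \<bar>real m - n * p\<bar> \<le> 2 * sqrt vr \<and> (3/4) / (4 * sqrt vr + 1) \<le> pmf (binomial_pmf n p) m"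
proof (rule ccontr)
  assume light: "\<not> ?thesis"
  let ?b = "pmf (binomial_pmf n p)"
  define T where "T = {k\<in>{..n}. \<bar>real k - n * p\<bar> \<le> 2 * sqrt vr}"
  have "(\<Sum>k\<in>{k\<in>{..n}. 2 * sqrt vr < \<bar>real k - n * p\<bar>}. ?b k) \<le> vr / (2 * sqrt vr)\<^sup>2"
    using binomial_chebyshev[of p "2 * sqrt vr" n] p vr by simp
  also have "\<dots> = 1/4" using vr(2) by (simp add: power_mult_distrib)
  finally have far: "(\<Sum>k\<in>{k\<in>{..n}. 2 * sqrt vr < \<bar>real k - n * p\<bar>}. ?b k) \<le> 1/4" .
  have "(\<Sum>k\<le>n. ?b k) = 1"
    using sum_pmf_binomial_eq_binomial_expect[of p n "\<lambda>_. 1"] p binomial_expect_const by simp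
  moreover have "(\<Sum>k\<le>n. ?b k) = (\<Sum>k\<in>T. ?b k) + (\<Sum>k\<in>{k\<in>{..n}. 2 * sqrt vr < \<bar>real k - n * p\<bar>}. ?b k)"
    unfolding T_def by (subst sum.union_disjoint[symmetric]) (auto intro: sum.cong)
  ultimately have mass: "3/4 \<le> (\<Sum>k\<in>T. ?b k)" using far by linarith
  have "T \<subseteq> {k. n * p - 2 * sqrt vr \<le> real k \<and> real k \<le> n * p + 2 * sqrt vr}"
    unfolding T_def by auto
  then have "real (card T) \<le> real (card {k. n * p - 2 * sqrt vr \<le> real k \<and> real k \<le> n * p + 2 * sqrt vr})"
    using card_mono[OF finite_nat_in_real_interval] by simp
  also have "\<dots> \<le> 4 * sqrt vr + 1"
    using card_nat_in_real_interval_le[of "n * p - 2 * sqrt vr" "n * p + 2 * sqrt vr"] vr(2) by simp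
  finally have card_T: "real (card T) \<le> 4 * sqrt vr + 1" .
  define c0 where "c0 = (3/4) / (4 * sqrt vr + 1)"
  have small: "?b k < c0" if "k \<in> T" for k
  proof -
    have "\<bar>real k - n * p\<bar> \<le> 2 * sqrt vr" using that by (simp add: T_def)
    then show ?thesis using light unfolding c0_def by (meson not_le)
  qed
  have "T \<noteq> {}" using mass by auto
  then have "(\<Sum>k\<in>T. ?b k) < (\<Sum>k\<in>T. c0)"
    by (intro sum_strict_mono small) (simp add: T_def)
  also have "\<dots> = real (card T) * c0" by simp
  also have "\<dots> \<le> (4 * sqrt vr + 1) * c0"
    using card_T by (rule mult_right_mono) (use vr(2) in \<open>simp add: c0_def\<close>)
  also have "\<dots> = 3/4"
  proof -
    have "4 * sqrt vr + 1 \<noteq> 0" using real_sqrt_gt_zero[OF vr(2)] by linarith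
    then show ?thesis unfolding c0_def by (simp add: field_simps)
  qed
  finally show False using mass by linarith
qed

lemma pmf_binomial_Suc_ratio:
  assumes "0 \<le> p" "p \<le> 1" "i < n"
  shows "pmf (binomial_pmf n p) (Suc i) * (real (Suc i) * (1 - p))
       = pmf (binomial_pmf n p) i * (real (n - i) * p)"
proof -
  have "(n choose Suc i) * Suc i = (n choose i) * (n - i)"
    using binomial_absorption[of i n] binomial_absorb_comp[of n i] by (simp add: mult.commute)
  then have choose: "real (n choose Suc i) * real (Suc i) = real (n choose i) * real (n - i)"
    by (metis of_nat_mult)
  have "pmf (binomial_pmf n p) (Suc i) * (real (Suc i) * (1 - p))
      = (real (n choose Suc i) * real (Suc i)) * (p ^ i * p) * ((1 - p) ^ (n - Suc i) * (1 - p))"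
    using assms by (simp only: pmf_binomial power_Suc2 mult_ac)
  also have "\<dots> = (real (n choose i) * real (n - i)) * (p ^ i * p) * (1 - p) ^ (n - i)"
    using assms(3) by (simp only: choose Suc_diff_Suc[symmetric] power_Suc2)
  also have "\<dots> = pmf (binomial_pmf n p) i * (real (n - i) * p)"
    using assms by (simp only: pmf_binomial mult_ac)
  finally show ?thesis .
qed

lemma pmf_binomial_Suc_eq:
  fixes n i :: nat and p vr :: real
  assumes p: "0 < p" "p < 1" and vr: "vr = n * p * (1 - p)" "0 < vr" and i: "i < n"
  shows "pmf (binomial_pmf n p) (Suc i) = pmf (binomial_pmf n p) i
      * ((1 - (real i - n * p) * p / vr) / (1 + (real i - n * p + 1) * (1 - p) / vr))"
proof -
  define A where "A = 1 - (real i - n * p) * p / vr"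
  define B where "B = 1 + (real i - n * p + 1) * (1 - p) / vr"
  have "real (n - i) * p = vr - (real i - n * p) * p" using i vr by (simp add: of_nat_diff algebra_simps)
  also have "\<dots> = vr * A" using vr(2) by (simp add: A_def field_simps)
  finally have num: "real (n - i) * p = vr * A" .
  have "real (Suc i) * (1 - p) = vr + (real i - n * p + 1) * (1 - p)" using vr by (simp add: algebra_simps)
  also have "\<dots> = vr * B" using vr(2) by (simp add: B_def field_simps)
  finally have den: "real (Suc i) * (1 - p) = vr * B" .
  have "0 < real (Suc i) * (1 - p)" using p by simp
  then have "0 < B" using vr(2) unfolding den by (simp add: zero_less_mult_iff)
  have "vr * (pmf (binomial_pmf n p) (Suc i) * B) = vr * (pmf (binomial_pmf n p) i * A)"
    using pmf_binomial_Suc_ratio[of p i n] p i unfolding num den by (simp only: mult_ac)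
  then show ?thesis
    using vr(2) \<open>0 < B\<close> unfolding A_def[symmetric] B_def[symmetric]
    by (simp del: pmf_binomial add: eq_divide_eq)
qed

lemma exp_le_one_minus:
  fixes a :: real
  assumes "\<bar>a\<bar> \<le> 1/2"
  shows "exp (- a - 2 * a\<^sup>2) \<le> 1 - a"
proof -
  have "- a - 2 * a\<^sup>2 \<le> ln (1 - a)"
  proof (cases "a \<ge> 0")
    case True
    then show ?thesis using assms ln_one_minus_pos_lower_bound[of a] by (simp add: abs_le_iff)
  next
    case False
    then have "- a - a\<^sup>2 \<le> ln (1 - a)"
      using assms ln_one_plus_pos_lower_bound[of "- a"] by (simp add: abs_le_iff)
    then show ?thesis using zero_le_power2[of a] by linarith
  qed
  moreover have "0 < 1 - a" using assms by (simp add: abs_le_iff)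
  ultimately show ?thesis by (metis exp_le_cancel_iff exp_ln)
qed

lemma one_minus_div_one_plus_exp_bounds:
  fixes a b :: real
  assumes a: "\<bar>a\<bar> \<le> 1/2" and b: "\<bar>b\<bar> \<le> 1/2"
  shows "exp (- a - b - 2 * a\<^sup>2) \<le> (1 - a) / (1 + b)"
    and "(1 - a) / (1 + b) \<le> exp (- a - b + 2 * b\<^sup>2)"
proof -
  have "exp (- a - b - 2 * a\<^sup>2) = exp (- a - 2 * a\<^sup>2) / exp b"
    by (simp add: exp_diff[symmetric])
  also have "\<dots> \<le> (1 - a) / (1 + b)"
    using exp_le_one_minus[OF a] exp_ge_add_one_self[of b] a b
    by (intro frac_le) (auto simp: abs_le_iff)
  finally show "exp (- a - b - 2 * a\<^sup>2) \<le> (1 - a) / (1 + b)" .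
  have "(1 - a) / (1 + b) \<le> exp (- a) / exp (b - 2 * b\<^sup>2)"
    using exp_le_one_minus[of "- b"] exp_ge_add_one_self[of "- a"] b
    by (intro frac_le) (auto simp: abs_le_iff)
  also have "\<dots> = exp (- a - b + 2 * b\<^sup>2)" by (simp add: exp_diff[symmetric] algebra_simps)
  finally show "(1 - a) / (1 + b) \<le> exp (- a - b + 2 * b\<^sup>2)" .
qed

lemma binomial_pmf_Suc_exp_bounds:
  fixes n i :: nat and p vr R :: real
  assumes p: "0 < p" "p < 1" and vr: "vr = n * p * (1 - p)"
    and R: "0 \<le> R" "2 * (R + 1) \<le> vr" and i: "\<bar>real i - n * p\<bar> \<le> R"
  defines "\<phi> \<equiv> \<lambda>k::nat. - (real k - n * p)\<^sup>2 / (2 * vr)"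
    and "E \<equiv> 1 / (2 * vr) + 2 * (R + 1)\<^sup>2 / vr\<^sup>2"
  shows "pmf (binomial_pmf n p) i * exp (\<phi> (Suc i) - \<phi> i - E) \<le> pmf (binomial_pmf n p) (Suc i)"
    and "pmf (binomial_pmf n p) (Suc i) * exp (\<phi> i - \<phi> (Suc i) - E) \<le> pmf (binomial_pmf n p) i"
proof -
  let ?b = "pmf (binomial_pmf n p)"
  define q where "q = 1 - p"
  define y where "y = real i - n * p"
  define a where "a = y * p / vr"
  define b where "b = (y + 1) * q / vr"
  have vr_pos: "0 < vr" using R by (simp add: algebra_simps)
  have q: "0 < q" "q < 1" using p by (simp_all add: q_def)
  have "p * (real n * (1 - p)) \<le> real n * (1 - p)" by (rule mult_left_le_one_le) (use p in auto)
  then have "real i < real n" using i R vr unfolding abs_le_iff by (simp add: algebra_simps)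
  then have i_lt: "i < n" by simp
  have abs_a: "\<bar>a\<bar> \<le> R / vr"
    using mult_mono[of "\<bar>y\<bar>" R p 1] i p vr_pos
    by (simp add: a_def y_def abs_mult abs_divide divide_right_mono)
  have abs_b: "\<bar>b\<bar> \<le> (R + 1) / vr"
    using mult_mono[of "\<bar>y + 1\<bar>" "R + 1" q 1] i q vr_pos
    by (simp add: b_def y_def abs_mult abs_divide divide_right_mono)
  have "R / vr \<le> 1/2" "(R + 1) / vr \<le> 1/2" using R vr_pos by (simp_all add: field_simps)
  then have a_half: "\<bar>a\<bar> \<le> 1/2" and b_half: "\<bar>b\<bar> \<le> 1/2" using abs_a abs_b by linarith+
  have a_sq: "a\<^sup>2 \<le> R\<^sup>2 / vr\<^sup>2" and b_sq: "b\<^sup>2 \<le> (R + 1)\<^sup>2 / vr\<^sup>2"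
    using power_mono[OF abs_a, of 2] power_mono[OF abs_b, of 2] by (simp_all add: power_divide)
  have a_plus_b: "a + b = (y + q) / vr" by (simp add: a_def b_def q_def add_divide_distrib[symmetric] algebra_simps)
  have ratio: "?b (Suc i) = ?b i * ((1 - a) / (1 + b))"
    using pmf_binomial_Suc_eq[OF p vr vr_pos i_lt] by (simp add: a_def b_def y_def q_def)
  have \<phi>_step: "\<phi> (Suc i) - \<phi> i = - ((y + 1/2) / vr)"
    using vr_pos by (simp add: \<phi>_def y_def field_simps power2_eq_square)
  have R_sq: "R\<^sup>2 / vr\<^sup>2 \<le> (R + 1)\<^sup>2 / vr\<^sup>2"
    using R by (intro divide_right_mono power_mono) auto
  have shift: "(y + 1/2) / vr = y / vr + 1 / (2 * vr)" "(y + 1) / vr = y / vr + 2 * (1 / (2 * vr))"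
    using vr_pos by (simp_all add: field_simps)
  have "y / vr \<le> (y + q) / vr" "(y + q) / vr \<le> (y + 1) / vr"
    using q vr_pos by (simp_all add: divide_right_mono)
  then have "\<phi> (Suc i) - \<phi> i - E \<le> - a - b - 2 * a\<^sup>2"
    using \<phi>_step shift a_sq R_sq a_plus_b unfolding E_def by linarith
  then have "exp (\<phi> (Suc i) - \<phi> i - E) \<le> exp (- a - b - 2 * a\<^sup>2)" by simp
  also have "\<dots> \<le> (1 - a) / (1 + b)" by (rule one_minus_div_one_plus_exp_bounds(1)[OF a_half b_half])
  finally show "?b i * exp (\<phi> (Suc i) - \<phi> i - E) \<le> ?b (Suc i)"
    unfolding ratio by (rule mult_left_mono) simp
  have "(- a - b + 2 * b\<^sup>2) + (\<phi> i - \<phi> (Suc i) - E) \<le> 0"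
    using \<phi>_step shift b_sq a_plus_b \<open>y / vr \<le> (y + q) / vr\<close> unfolding E_def by linarith
  then have "exp (- a - b + 2 * b\<^sup>2) * exp (\<phi> i - \<phi> (Suc i) - E) \<le> 1"
    by (simp add: exp_add[symmetric])
  then have "(1 - a) / (1 + b) * exp (\<phi> i - \<phi> (Suc i) - E) \<le> 1"
    using one_minus_div_one_plus_exp_bounds(2)[OF a_half b_half]
    by (meson exp_ge_zero mult_right_mono order_trans)
  then show "?b (Suc i) * exp (\<phi> i - \<phi> (Suc i) - E) \<le> ?b i"
    unfolding ratio mult.assoc using mult_left_mono[of _ 1 "?b i"] by fastforce
qed

lemma exp_chain_up:
  fixes f \<phi> :: "nat \<Rightarrow> real"
  assumes "\<And>i. m \<le> i \<Longrightarrow> i < m + d \<Longrightarrow> f i * exp (\<phi> (Suc i) - \<phi> i - E) \<le> f (Suc i)"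
  shows "f m * exp (\<phi> (m + d) - \<phi> m - real d * E) \<le> f (m + d)"
  using assms
proof (induction d)
  case (Suc d)
  have "f m * exp (\<phi> (m + Suc d) - \<phi> m - real (Suc d) * E)
      = f m * exp (\<phi> (m + d) - \<phi> m - real d * E) * exp (\<phi> (Suc (m + d)) - \<phi> (m + d) - E)"
    by (simp add: mult.assoc exp_add[symmetric] algebra_simps)
  also have "\<dots> \<le> f (m + d) * exp (\<phi> (Suc (m + d)) - \<phi> (m + d) - E)"
    using Suc by (intro mult_right_mono) auto
  also have "\<dots> \<le> f (m + Suc d)" using Suc.prems[of "m + d"] by simp
  finally show ?case .
qed simp

lemma exp_chain_down:
  fixes f \<phi> :: "nat \<Rightarrow> real"
  assumes "\<And>i. k \<le> i \<Longrightarrow> i < k + d \<Longrightarrow> f (Suc i) * exp (\<phi> i - \<phi> (Suc i) - E) \<le> f i"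
  shows "f (k + d) * exp (\<phi> k - \<phi> (k + d) - real d * E) \<le> f k"
  using assms
proof (induction d)
  case (Suc d)
  have "f (k + Suc d) * exp (\<phi> k - \<phi> (k + Suc d) - real (Suc d) * E)
      = f (Suc (k + d)) * exp (\<phi> (k + d) - \<phi> (Suc (k + d)) - E) * exp (\<phi> k - \<phi> (k + d) - real d * E)"
    by (simp add: mult.assoc exp_add[symmetric] algebra_simps)
  also have "\<dots> \<le> f (k + d) * exp (\<phi> k - \<phi> (k + d) - real d * E)"
    using Suc.prems[of "k + d"] by (intro mult_right_mono) auto
  also have "\<dots> \<le> f k" using Suc by auto
  finally show ?case .
qed simp

lemma exp_chain:
  fixes f \<phi> :: "nat \<Rightarrow> real"
  assumes up: "\<And>i. min m k \<le> i \<Longrightarrow> i < max m k \<Longrightarrow> f i * exp (\<phi> (Suc i) - \<phi> i - E) \<le> f (Suc i)"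
    and down: "\<And>i. min m k \<le> i \<Longrightarrow> i < max m k \<Longrightarrow> f (Suc i) * exp (\<phi> i - \<phi> (Suc i) - E) \<le> f i"
  shows "f m * exp (\<phi> k - \<phi> m - \<bar>real k - real m\<bar> * E) \<le> f k"
proof (cases "m \<le> k")
  case True
  then show ?thesis
    using exp_chain_up[of m "k - m" f \<phi> E] up by (simp add: of_nat_diff)
next
  case False
  then show ?thesis
    using exp_chain_down[of k "m - k" f \<phi> E] down by (simp add: of_nat_diff)
qed

lemma binomial_pmf_local_lower_bound:
  fixes n k :: nat and p vr R :: real
  assumes p: "0 < p" "p < 1" and vr: "vr = n * p * (1 - p)"
    and R: "2 * sqrt vr \<le> R" "2 * (R + 1) \<le> vr" and k: "\<bar>real k - n * p\<bar> \<le> R"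
  shows "(3/4) / (4 * sqrt vr + 1) * exp (- (real k - n * p)\<^sup>2 / (2 * vr) - 2 * R * (1 / (2 * vr) + 2 * (R + 1)\<^sup>2 / vr\<^sup>2))
      \<le> pmf (binomial_pmf n p) k"
proof -
  define \<phi> where "\<phi> = (\<lambda>k::nat. - (real k - n * p)\<^sup>2 / (2 * vr))"
  define E where "E = 1 / (2 * vr) + 2 * (R + 1)\<^sup>2 / vr\<^sup>2"
  have "0 \<le> vr" using vr p by simp
  then have R0: "0 \<le> R" using R(1) real_sqrt_ge_zero[of vr] by linarith
  have vr_pos: "0 < vr" using R(2) R0 by (simp add: algebra_simps)
  obtain m where m: "\<bar>real m - n * p\<bar> \<le> 2 * sqrt vr" "(3/4) / (4 * sqrt vr + 1) \<le> pmf (binomial_pmf n p) m"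
    using binomial_pmf_heavy_near_mean[OF p vr vr_pos] by blast
  have in_range: "\<bar>real i - n * p\<bar> \<le> R" if "min m k \<le> i" "i \<le> max m k" for i
    using that m(1) R(1) k by (auto simp: abs_le_iff)
  have walk: "pmf (binomial_pmf n p) m * exp (\<phi> k - \<phi> m - \<bar>real k - real m\<bar> * E) \<le> pmf (binomial_pmf n p) k"
    by (rule exp_chain) (use binomial_pmf_Suc_exp_bounds[OF p vr R0 R(2) in_range] in
        \<open>simp_all add: \<phi>_def E_def\<close>)
  have "- (real k - n * p)\<^sup>2 / (2 * vr) - 2 * R * E \<le> \<phi> k - \<phi> m - \<bar>real k - real m\<bar> * E"
  proof -
    have "\<phi> m \<le> 0" "E \<ge> 0" using vr_pos by (simp_all add: \<phi>_def E_def)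
    moreover have "\<bar>real k - real m\<bar> \<le> 2 * R" using m(1) R(1) k by linarith
    ultimately show ?thesis using mult_right_mono[of "\<bar>real k - real m\<bar>" "2 * R" E] by (simp add: \<phi>_def)
  qed
  then show ?thesis
    using order_trans[OF mult_mono[OF m(2) exp_mono] walk] unfolding E_def by simp
qed

lemma local_walk_error_le:
  fixes V v h :: real
  assumes V: "0 < V" and v: "(99/200) * V \<le> v" and h: "100 \<le> h" "h \<le> V / 1000"
    and h_cube: "h ^ 3 \<le> V\<^sup>2 / 100000"
  shows "2 * (2 * h) * (1 / (2 * v) + 2 * (2 * h + 1)\<^sup>2 / v\<^sup>2) \<le> 7/1000"
proof -
  have v_pos: "0 < v" using V v by linarith
  have "2 * (2 * h) * (1 / (2 * v)) \<le> 41/10000"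
    using v h v_pos by (simp add: field_simps)
  moreover have "2 * (2 * h) * (2 * (2 * h + 1)\<^sup>2 / v\<^sup>2) \<le> 29/10000"
  proof -
    have "(2 * h + 1)\<^sup>2 \<le> ((201/100) * h)\<^sup>2" using h by (intro power_mono) auto
    then have "h * (2 * h + 1)\<^sup>2 \<le> h * ((201/100) * h)\<^sup>2" using h by (intro mult_left_mono) auto
    also have "\<dots> = (40401/10000) * h ^ 3" by (simp add: power2_eq_square power3_eq_cube)
    also have "\<dots> \<le> (40401/1000000000) * V\<^sup>2" using h_cube by simp
    also have "\<dots> \<le> (29/80000) * v\<^sup>2"
    proof -
      have "((99/200) * V)\<^sup>2 \<le> v\<^sup>2" using v V by (intro power_mono) auto
      moreover have "((99/200) * V)\<^sup>2 = (9801/40000) * V\<^sup>2" by (simp add: power2_eq_square)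
      ultimately show ?thesis using zero_le_power2[of V] by linarith
    qed
    finally show ?thesis using v_pos by (simp add: field_simps)
  qed
  ultimately show ?thesis by (simp add: distrib_left)
qed

lemma binomial_pmf_lower_bound_window:
  fixes n k :: nat and p vr V h :: real
  assumes p: "0 < p" "p < 1" and vr: "vr = n * p * (1 - p)" "(99/200) * V \<le> vr" "vr \<le> V"
    and V: "0 < V" and h: "2 * sqrt V < h" "100 \<le> h" "h \<le> V / 1000" "h ^ 3 \<le> V\<^sup>2 / 100000"
    and k: "\<bar>real k - n * p\<bar> \<le> 2 * h"
  shows "(3/4) / (4 * sqrt vr + 1) * exp (- (real k - n * p)\<^sup>2 / (2 * vr) - 7/1000)
      \<le> pmf (binomial_pmf n p) k"
proof -
  define E where "E = 2 * (2 * h) * (1 / (2 * vr) + 2 * (2 * h + 1)\<^sup>2 / vr\<^sup>2)"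
  have "sqrt vr \<le> sqrt V" using vr(3) by simp
  then have "2 * sqrt vr \<le> 2 * h" using h by linarith
  moreover have "4 * h + 2 \<le> vr" using h vr V by linarith
  then have "2 * (2 * h + 1) \<le> vr" by simp
  ultimately have local: "(3/4) / (4 * sqrt vr + 1) * exp (- (real k - n * p)\<^sup>2 / (2 * vr) - E)
      \<le> pmf (binomial_pmf n p) k"
    using binomial_pmf_local_lower_bound[OF p vr(1) _ _ k] unfolding E_def by simp
  have "E \<le> 7/1000" unfolding E_def by (rule local_walk_error_le[OF V vr(2) h(2-4)])
  then have "exp (- (real k - n * p)\<^sup>2 / (2 * vr) - 7/1000) \<le> exp (- (real k - n * p)\<^sup>2 / (2 * vr) - E)"
    by simp
  moreover have "0 \<le> (3/4) / (4 * sqrt vr + 1)" using vr V by simp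
  ultimately show ?thesis using local by (meson order_trans mult_left_mono)
qed

lemma box_quadratic_form_bound:
  fixes V v1 v2 h s u :: real
  assumes V: "V = v1 + v2" "0 < v1" "0 < v2" and h: "0 < h" "(V / h)\<^sup>2 \<le> V / 4"
    and s: "0 \<le> s" "s\<^sup>2 \<le> v1" and u: "- s \<le> u" "u \<le> V / h - s"
    and v: "v1 + V / 4 \<le> (156/100) * v2"
  shows "(h * v1 / V + s)\<^sup>2 / (2 * v1) + (h * v2 / V + u)\<^sup>2 / (2 * v2) \<le> h\<^sup>2 / (2 * V) + 228/100"
proof -
  have V_pos: "0 < V" using V by simp
  have expand: "(h * v / V + t)\<^sup>2 / (2 * v) = h\<^sup>2 * v / (2 * V\<^sup>2) + (h / V) * t + t\<^sup>2 / (2 * v)"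
    if "0 < v" for v t using that V_pos by (simp add: field_simps power2_eq_square)
  have "h\<^sup>2 * v1 / (2 * V\<^sup>2) + h\<^sup>2 * v2 / (2 * V\<^sup>2) = h\<^sup>2 * V / (2 * V\<^sup>2)"
    unfolding V(1) by (simp add: add_divide_distrib distrib_left)
  also have "\<dots> = h\<^sup>2 / (2 * V)" using V_pos by (simp add: power2_eq_square)
  finally have main: "h\<^sup>2 * v1 / (2 * V\<^sup>2) + h\<^sup>2 * v2 / (2 * V\<^sup>2) = h\<^sup>2 / (2 * V)" .
  have cross: "(h / V) * s + (h / V) * u \<le> 1"
    using mult_left_mono[of "s + u" "V / h" "h / V"] u h V_pos by (simp add: distrib_left)
  have "s\<^sup>2 / (2 * v1) \<le> 1/2" using s V by (simp add: field_simps)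
  moreover have "u\<^sup>2 \<le> v1 + V / 4"
  proof (cases "0 \<le> u")
    case True
    then have "u\<^sup>2 \<le> (V / h)\<^sup>2" using u s by (intro power_mono) auto
    then show ?thesis using h V by linarith
  next
    case False
    then have "(- u)\<^sup>2 \<le> s\<^sup>2" using u by (intro power_mono) auto
    then show ?thesis using s V_pos by simp
  qed
  then have "u\<^sup>2 / (2 * v2) \<le> 78/100" using v V by (simp add: field_simps)
  ultimately show ?thesis unfolding expand[OF V(2)] expand[OF V(3)] using main cross by linarith
qed

lemma measure_pair_pmf_ge_Sigma:
  assumes fin: "finite J" "\<And>j. j \<in> J \<Longrightarrow> finite (K j)" and sub: "Sigma J K \<subseteq> A"
    and L: "\<And>j k. j \<in> J \<Longrightarrow> k \<in> K j \<Longrightarrow> L \<le> pmf P j * pmf Q k" "0 \<le> L"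
    and card: "a \<le> real (card J)" "\<And>j. j \<in> J \<Longrightarrow> b \<le> real (card (K j))" "0 \<le> b"
  shows "a * b * L \<le> measure_pmf.prob (pair_pmf P Q) A"
proof -
  have "a * b * L \<le> (\<Sum>j\<in>J. b * L)"
    using card(1,3) L(2) by (simp add: mult_right_mono mult.assoc)
  also have "\<dots> \<le> (\<Sum>j\<in>J. \<Sum>k\<in>K j. pmf P j * pmf Q k)"
  proof (rule sum_mono)
    fix j assume j: "j \<in> J"
    have "b * L \<le> real (card (K j)) * L" using card(2)[OF j] L(2) by (rule mult_right_mono)
    also have "\<dots> \<le> (\<Sum>k\<in>K j. pmf P j * pmf Q k)" using sum_mono[OF L(1)[OF j]] by simp
    finally show "b * L \<le> (\<Sum>k\<in>K j. pmf P j * pmf Q k)" .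
  qed
  also have "\<dots> = (\<Sum>x\<in>Sigma J K. pmf (pair_pmf P Q) x)"
    by (subst sum.Sigma) (use fin in \<open>auto simp: pmf_pair intro: sum.cong\<close>)
  also have "\<dots> = measure_pmf.prob (pair_pmf P Q) (Sigma J K)"
    using fin by (intro measure_measure_pmf_finite[symmetric] finite_SigmaI)
  also have "\<dots> \<le> measure_pmf.prob (pair_pmf P Q) A"
    using sub by (rule measure_pmf.finite_measure_mono) simp
  finally show ?thesis .
qed

text \<open>
  A single large \<open>N\<close>: the assumptions are numerical instances of the asymptotic hypotheses.
\<close>

locale binomial_tail_regime =
  fixes n1 n2 :: nat and p h V :: real
  assumes V_eq: "V = (real n1 + real n2) * p * (1 - p)"
    and p_pos: "0 < p" and p_lt_1: "p < 1"
    and V_large: "100000 \<le> V"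
    and h_gt: "2 * sqrt V < h"
    and h_cube: "h ^ 3 \<le> V\<^sup>2 / 100000"
    and balanced: "\<bar>real n2 - real n1\<bar> \<le> (real n1 + real n2) / 100"
begin

definition v1 :: real where "v1 = real n1 * p * (1 - p)"
text \<open>\<open>X\<^sub>2 \<sim> B(n\<^sub>2, q)\<close> with \<open>q = 1 - p\<close>; its variance is written as \<open>n\<^sub>2 q (1 - q)\<close> to match the
  one-binomial lemmas.\<close>
definition v2 :: real where "v2 = real n2 * (1 - p) * (1 - (1 - p))"
definition \<mu>1 :: real where "\<mu>1 = real n1 * p"
definition \<mu>2 :: real where "\<mu>2 = real n2 * (1 - p)"

lemma V_pos: "0 < V"
  using V_large by simp

lemma V_split: "V = v1 + v2"
  unfolding V_eq v1_def v2_def by (simp add: algebra_simps)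

lemma v1_bounds: "(99/200) * V \<le> v1" "v1 \<le> (101/200) * V"
  and v2_bounds: "(99/200) * V \<le> v2" "v2 \<le> (101/200) * V"
proof -
  have pq: "0 \<le> p * (1 - p)" using p_pos p_lt_1 by simp
  have n: "(99/200) * (real n1 + real n2) \<le> real n1" "real n1 \<le> (101/200) * (real n1 + real n2)"
    "(99/200) * (real n1 + real n2) \<le> real n2" "real n2 \<le> (101/200) * (real n1 + real n2)"
    using balanced unfolding abs_le_iff by (simp_all add: field_simps)
  have V': "V = (real n1 + real n2) * (p * (1 - p))" and v1': "v1 = real n1 * (p * (1 - p))"
    and v2': "v2 = real n2 * (p * (1 - p))"
    by (simp_all add: V_eq v1_def v2_def algebra_simps)
  show "(99/200) * V \<le> v1" "v1 \<le> (101/200) * V" "(99/200) * V \<le> v2" "v2 \<le> (101/200) * V"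
    using mult_right_mono[OF n(1) pq] mult_right_mono[OF n(2) pq]
      mult_right_mono[OF n(3) pq] mult_right_mono[OF n(4) pq]
    by (simp_all only: V' v1' v2' mult.assoc)
qed

lemma h_sq_gt: "4 * V < h\<^sup>2"
proof -
  have "(2 * sqrt V)\<^sup>2 < h\<^sup>2" using h_gt V_pos by (intro power_strict_mono) auto
  then show ?thesis using V_pos by (simp add: power_mult_distrib)
qed

lemma h_ge: "632 < h"
proof -
  have "316 \<le> sqrt V" using V_large by (intro real_le_rsqrt) simp
  then show ?thesis using h_gt by linarith
qed

lemma h_le: "h \<le> V / 1000"
proof (rule ccontr)
  assume "\<not> h \<le> V / 1000"
  then have "(V / 1000) ^ 3 < h ^ 3" using V_pos by (intro power_strict_mono) auto
  moreover have "V\<^sup>2 * 20000 \<le> V\<^sup>2 * V" using V_large by (intro mult_left_mono) auto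
  then have "V\<^sup>2 / 100000 < (V / 1000) ^ 3"
    using V_pos by (simp add: power3_eq_cube power2_eq_square field_simps)
  ultimately show False using h_cube by linarith
qed

definition c1 :: real where "c1 = (3/4) / (4 * sqrt v1 + 1)"
definition c2 :: real where "c2 = (3/4) / (4 * sqrt v2 + 1)"
definition w :: real where "w = V / h"

lemma c_pos: "0 < c1" "0 < c2"
  using v1_bounds v2_bounds V_pos by (simp_all add: c1_def c2_def add_pos_nonneg)

lemma pmf_X1_lower:
  "\<bar>real j - \<mu>1\<bar> \<le> 2 * h \<Longrightarrow>
    c1 * exp (- (real j - \<mu>1)\<^sup>2 / (2 * v1) - 7/1000) \<le> pmf (binomial_pmf n1 p) j"
  using binomial_pmf_lower_bound_window[OF p_pos p_lt_1 v1_def v1_bounds(1) _ V_pos h_gt _ h_le h_cube]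
    V_split v2_bounds V_pos h_ge unfolding \<mu>1_def c1_def by simp

lemma pmf_X2_lower:
  "\<bar>real k - \<mu>2\<bar> \<le> 2 * h \<Longrightarrow>
    c2 * exp (- (real k - \<mu>2)\<^sup>2 / (2 * v2) - 7/1000) \<le> pmf (binomial_pmf n2 (1 - p)) k"
  using binomial_pmf_lower_bound_window[OF _ _ v2_def v2_bounds(1) _ V_pos h_gt _ h_le h_cube]
    V_split v1_bounds V_pos h_ge p_pos p_lt_1 unfolding \<mu>2_def c2_def by simp

lemma sqrt_v1_lt: "sqrt v1 < h / 2"
proof -
  have "sqrt v1 \<le> sqrt V" using V_split v2_bounds V_pos by (intro real_sqrt_le_mono) linarith
  then show ?thesis using h_gt by linarith
qed

lemma w_bounds: "1000 \<le> w" "w \<le> h" "w\<^sup>2 \<le> V / 4"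
proof -
  show "1000 \<le> w" using h_le h_ge by (simp add: w_def field_simps)
  have "w\<^sup>2 * h\<^sup>2 = V\<^sup>2" using h_ge by (simp add: w_def power_divide)
  moreover have "w\<^sup>2 * (4 * V) \<le> w\<^sup>2 * h\<^sup>2" using h_sq_gt by (intro mult_left_mono) auto
  ultimately show "w\<^sup>2 \<le> V / 4" using V_pos by (simp add: power2_eq_square field_simps)
  show "w \<le> h" using h_sq_gt h_ge V_pos by (simp add: w_def power2_eq_square field_simps)
qed

lemma h_split: "h * v1 / V + h * v2 / V = h"
  using V_split V_pos by (simp add: add_divide_distrib[symmetric] distrib_left[symmetric])

text \<open>
  The box: \<open>X\<^sub>1\<close> exceeds \<open>\<mu>\<^sub>1\<close> by its share \<open>h v\<^sub>1/V\<close> of the excess plus at most one standard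
  deviation, and \<open>X\<^sub>2\<close> completes the sum to within \<open>w = V/h\<close> above the threshold, the width
  on which the cross term \<open>(h/V)(s + u)\<close> of the exponent stays below \<open>1\<close>.
\<close>

lemma box_pmf_lower:
  fixes j k :: nat
  assumes j: "\<mu>1 + h * v1 / V \<le> real j" "real j \<le> \<mu>1 + h * v1 / V + sqrt v1"
    and k: "\<mu>1 + \<mu>2 + h - real j \<le> real k" "real k \<le> \<mu>1 + \<mu>2 + h - real j + w"
  shows "c1 * c2 * exp (- h\<^sup>2 / (2 * V) - 23/10)
      \<le> pmf (binomial_pmf n1 p) j * pmf (binomial_pmf n2 (1 - p)) k"
proof -
  define s where "s = real j - \<mu>1 - h * v1 / V"
  define u where "u = real k - \<mu>2 - h * v2 / V"
  have s: "0 \<le> s" "s \<le> sqrt v1" and u: "- s \<le> u" "u \<le> w - s"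
    using j k h_split by (auto simp: s_def u_def)
  have "0 \<le> v1" "0 \<le> v2" using v1_bounds v2_bounds V_pos by linarith+
  then have "0 \<le> h * v1 / V" "0 \<le> h * v2 / V" using h_ge V_pos by simp_all
  then have hv: "0 \<le> h * v1 / V" "h * v1 / V \<le> h" "0 \<le> h * v2 / V" "h * v2 / V \<le> h"
    using h_split by linarith+
  have X1: "c1 * exp (- (real j - \<mu>1)\<^sup>2 / (2 * v1) - 7/1000) \<le> pmf (binomial_pmf n1 p) j"
    using s hv sqrt_v1_lt by (intro pmf_X1_lower) (auto simp: s_def abs_le_iff)
  have X2: "c2 * exp (- (real k - \<mu>2)\<^sup>2 / (2 * v2) - 7/1000) \<le> pmf (binomial_pmf n2 (1 - p)) k"
    using s u hv sqrt_v1_lt w_bounds by (intro pmf_X2_lower) (auto simp: u_def abs_le_iff)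
  have "(h * v1 / V + s)\<^sup>2 / (2 * v1) + (h * v2 / V + u)\<^sup>2 / (2 * v2) \<le> h\<^sup>2 / (2 * V) + 228/100"
  proof (rule box_quadratic_form_bound[OF V_split])
    show "(V / h)\<^sup>2 \<le> V / 4" using w_bounds by (simp add: w_def)
    show "s\<^sup>2 \<le> v1" using s power_mono[of s "sqrt v1" 2] v1_bounds V_pos by simp
    show "u \<le> V / h - s" using u by (simp add: w_def)
    show "v1 + V / 4 \<le> (156/100) * v2" using v1_bounds v2_bounds by linarith
  qed (use s u V_pos v1_bounds v2_bounds h_ge in auto)
  then have "- h\<^sup>2 / (2 * V) - 23/10
      \<le> (- (real j - \<mu>1)\<^sup>2 / (2 * v1) - 7/1000) + (- (real k - \<mu>2)\<^sup>2 / (2 * v2) - 7/1000)"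
    by (simp add: s_def u_def)
  then have "c1 * c2 * exp (- h\<^sup>2 / (2 * V) - 23/10)
      \<le> c1 * c2 * exp ((- (real j - \<mu>1)\<^sup>2 / (2 * v1) - 7/1000) + (- (real k - \<mu>2)\<^sup>2 / (2 * v2) - 7/1000))"
    using c_pos by (intro mult_left_mono) auto
  also have "\<dots> = (c1 * exp (- (real j - \<mu>1)\<^sup>2 / (2 * v1) - 7/1000))
      * (c2 * exp (- (real k - \<mu>2)\<^sup>2 / (2 * v2) - 7/1000))"
    by (simp only: exp_add mult_ac)
  also have "\<dots> \<le> pmf (binomial_pmf n1 p) j * pmf (binomial_pmf n2 (1 - p)) k"
    using X1 X2 c_pos by (intro mult_mono) auto
  finally show ?thesis .
qed

lemma tail_ge_box_mass:
  "(sqrt v1 - 1) * (w - 1) * (c1 * c2 * exp (- h\<^sup>2 / (2 * V) - 23/10))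
    \<le> binom_sum_tail n1 n2 p (\<mu>1 + \<mu>2 + h)"
proof -
  define J where "J = {j::nat. \<mu>1 + h * v1 / V \<le> real j \<and> real j \<le> \<mu>1 + h * v1 / V + sqrt v1}"
  define K where "K = (\<lambda>j::nat. {k::nat. \<mu>1 + \<mu>2 + h - real j \<le> real k \<and> real k \<le> \<mu>1 + \<mu>2 + h - real j + w})"
  have v_nonneg: "0 \<le> v1" "0 \<le> v2" using v1_bounds v2_bounds V_pos by linarith+
  have "v2 \<le> \<mu>2"
    using mult_left_le_one_le[of "real n2 * (1 - p)" p] p_pos p_lt_1 by (simp add: v2_def \<mu>2_def mult_ac)
  then have "sqrt v1 \<le> \<mu>2" using sqrt_v1_lt h_le v2_bounds by linarith
  moreover have "0 \<le> h * v2 / V" using v_nonneg h_ge V_pos by simp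
  ultimately have K_lo: "0 \<le> \<mu>1 + \<mu>2 + h - real j" if "j \<in> J" for j
    using that h_split by (auto simp: J_def)
  show ?thesis unfolding binom_sum_tail_def
  proof (rule measure_pair_pmf_ge_Sigma)
    show "finite J" "\<And>j. finite (K j)" unfolding J_def K_def by (rule finite_nat_in_real_interval)+
    show "Sigma J K \<subseteq> {(x1, x2). \<mu>1 + \<mu>2 + h \<le> real x1 + real x2}" by (auto simp: K_def)
    show "\<And>j k. j \<in> J \<Longrightarrow> k \<in> K j \<Longrightarrow> c1 * c2 * exp (- h\<^sup>2 / (2 * V) - 23/10)
        \<le> pmf (binomial_pmf n1 p) j * pmf (binomial_pmf n2 (1 - p)) k"
      unfolding J_def K_def by (rule box_pmf_lower) auto
    show "0 \<le> c1 * c2 * exp (- h\<^sup>2 / (2 * V) - 23/10)" using c_pos by simp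
    show "sqrt v1 - 1 \<le> real (card J)" unfolding J_def
      using card_nat_in_real_interval_ge[of "\<mu>1 + h * v1 / V" "\<mu>1 + h * v1 / V + sqrt v1"]
        v_nonneg h_ge V_pos p_pos by (simp add: \<mu>1_def)
    show "w - 1 \<le> real (card (K j))" if "j \<in> J" for j unfolding K_def
      using card_nat_in_real_interval_ge[OF K_lo[OF that], of "\<mu>1 + \<mu>2 + h - real j + w"] w_bounds
      by simp
    show "0 \<le> w - 1" using w_bounds by simp
  qed
qed

lemma box_mass_ge:
  "sqrt V / (2 * pi * h) \<le> (sqrt v1 - 1) * (w - 1) * (c1 * c2 * exp (17/10))"
proof -
  define A where "A = sqrt v1"
  define B where "B = sqrt v2"
  define K :: real where "K = (995/1000) * (999/1000) * (9/16) * (4145/1000) / (4005/1000)\<^sup>2"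
  have A: "222 \<le> A" unfolding A_def using v1_bounds V_large by (intro real_le_rsqrt) simp
  have B: "222 \<le> B" unfolding B_def using v2_bounds V_large by (intro real_le_rsqrt) simp
  have "(995/1000) * A \<le> A - 1" "(999/1000) * w \<le> w - 1" using A w_bounds by linarith+
  moreover have "(3/4) / ((4005/1000) * A) \<le> c1" "(3/4) / ((4005/1000) * B) \<le> c2"
    unfolding c1_def c2_def A_def[symmetric] B_def[symmetric] using A B by (intro frac_le; simp)+
  moreover have "4145/1000 \<le> exp (17/10::real)"
    using exp_lower_Taylor_quadratic[of "17/10::real"] by (simp add: power2_eq_square)
  ultimately have "((995/1000) * A) * ((999/1000) * w) * ((3/4) / ((4005/1000) * A) * ((3/4) / ((4005/1000) * B)) * (4145/1000))
      \<le> (A - 1) * (w - 1) * (c1 * c2 * exp (17/10))"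
    using A B w_bounds c_pos by (intro mult_mono mult_nonneg_nonneg) auto
  moreover have "((995/1000) * A) * ((999/1000) * w) * ((3/4) / ((4005/1000) * A) * ((3/4) / ((4005/1000) * B)) * (4145/1000))
      = K * (w / B)"
    using A B by (simp add: K_def field_simps power2_eq_square)
  moreover have "sqrt V / (2 * pi * h) \<le> K * (w / B)"
  proof -
    have "sqrt V * B = sqrt (V * v2)" unfolding B_def by (simp add: real_sqrt_mult)
    also have "\<dots> \<le> sqrt (((72/100) * V)\<^sup>2)"
      using mult_left_mono[OF v2_bounds(2), of V] V_pos by (intro real_sqrt_le_mono) (simp add: power2_eq_square)
    also have "\<dots> = (72/100) * V" using V_pos by simp
    also have "\<dots> \<le> K * V * 6" using V_pos by (simp add: K_def power2_eq_square)
    also have "\<dots> \<le> K * V * (2 * pi)" using V_pos pi_gt3 by (intro mult_left_mono) (auto simp: K_def)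
    finally show ?thesis using B h_ge V_pos unfolding w_def by (simp add: field_simps)
  qed
  ultimately show ?thesis unfolding A_def by linarith
qed

theorem tail_lower_bound:
  "sqrt V / (2 * pi * h) * exp (- h\<^sup>2 / (2 * V) - 4)
    \<le> binom_sum_tail n1 n2 p (real n1 * p + real n2 * (1 - p) + h)"
proof -
  have e: "exp (17/10) * exp (- h\<^sup>2 / (2 * V) - 4) = exp (- h\<^sup>2 / (2 * V) - 23/10)"
    by (simp add: exp_add[symmetric])
  have "sqrt V / (2 * pi * h) * exp (- h\<^sup>2 / (2 * V) - 4)
      \<le> (sqrt v1 - 1) * (w - 1) * (c1 * c2 * exp (17/10)) * exp (- h\<^sup>2 / (2 * V) - 4)"
    by (rule mult_right_mono[OF box_mass_ge]) simp
  also have "\<dots> = (sqrt v1 - 1) * (w - 1) * (c1 * c2 * exp (- h\<^sup>2 / (2 * V) - 23/10))"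
    by (simp only: mult.assoc e)
  also have "\<dots> \<le> binom_sum_tail n1 n2 p (real n1 * p + real n2 * (1 - p) + h)"
    using tail_ge_box_mass by (simp add: \<mu>1_def \<mu>2_def)
  finally show ?thesis .
qed

lemma tail_lower_bound_strict:
  assumes "0 < \<epsilon>"
  shows "sqrt V / (2 * pi * h) * exp (- h\<^sup>2 / (2 * V) - 4 - \<epsilon>)
    < binom_sum_tail n1 n2 p (real n1 * p + real n2 * (1 - p) + h)"
proof -
  have "0 < sqrt V / (2 * pi * h)" using V_pos h_ge by simp
  then have "sqrt V / (2 * pi * h) * exp (- h\<^sup>2 / (2 * V) - 4 - \<epsilon>)
      < sqrt V / (2 * pi * h) * exp (- h\<^sup>2 / (2 * V) - 4)"
    using assms by (intro mult_strict_left_mono) auto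
  then show ?thesis using tail_lower_bound by linarith
qed

end

lemma binomial_tail_regimeI:
  fixes n1 n2 :: nat and p h V :: real
  assumes p: "0 \<le> p" "p \<le> 1" and V: "V = (real n1 + real n2) * p * (1 - p)" "100000 \<le> V"
    and h: "2 * sqrt V < h" "h \<le> (V / 2) powr (2/3) / 100"
    and diff: "\<bar>h * (real n2 - real n1)\<bar> \<le> (real n1 + real n2) * sqrt (V / 2) / 100"
  shows "binomial_tail_regime n1 n2 p h V"
proof
  show "0 < p" "p < 1" using p V by (auto simp: le_less)
  show "V = (real n1 + real n2) * p * (1 - p)" "100000 \<le> V" "2 * sqrt V < h" by (fact V h)+
  have V_pos: "0 < V" using V by simp
  have h_pos: "0 < h" using h(1) real_sqrt_ge_zero[of V] V_pos by linarith
  have "h ^ 3 \<le> ((V / 2) powr (2/3) / 100) ^ 3" using h h_pos by (intro power_mono) auto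
  also have "\<dots> = (V / 2)\<^sup>2 / 1000000"
    using V_pos by (simp add: power_divide powr_power powr_numeral)
  also have "\<dots> \<le> V\<^sup>2 / 100000" by (simp add: power_divide)
  finally show "h ^ 3 \<le> V\<^sup>2 / 100000" .
  have "sqrt (V / 2) \<le> sqrt V" using V_pos by simp
  then have "sqrt (V / 2) \<le> h" using h(1) real_sqrt_ge_zero[of V] V_pos by linarith
  then have "(real n1 + real n2) * sqrt (V / 2) / 100 \<le> (real n1 + real n2) * h / 100"
    by (simp add: mult_left_mono)
  moreover have "\<bar>h * (real n2 - real n1)\<bar> = h * \<bar>real n2 - real n1\<bar>" using h_pos by (simp add: abs_mult)
  ultimately have "h * \<bar>real n2 - real n1\<bar> \<le> h * ((real n1 + real n2) / 100)"
    using diff by (simp add: mult.commute)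
  then show "\<bar>real n2 - real n1\<bar> \<le> (real n1 + real n2) / 100"
    using h_pos by (rule mult_left_le_imp_le)
qed

lemma eventually_binomial_tail_regime:
  fixes n1 n2 :: "nat \<Rightarrow> nat" and p h :: "nat \<Rightarrow> real"
  defines "N \<equiv> (\<lambda>m. (real (n1 m) + real (n2 m)) / 2)"
      and "S \<equiv> (\<lambda>m. (real (n2 m) - real (n1 m)) / 2)"
  assumes p_range: "\<forall>m. 0 \<le> p m \<and> p m \<le> 1"
      and var_inf: "filterlim (\<lambda>m. p m * (1 - p m) * N m) at_top sequentially"
      and h_lower: "\<forall>m. 2 * sqrt (2 * p m * (1 - p m) * N m) < h m"
      and h_upper: "h \<in> o(\<lambda>m. (p m * (1 - p m) * N m) powr (2/3))"
      and hS: "(\<lambda>m. h m * S m) \<in> o(\<lambda>m. N m * sqrt (p m * (1 - p m) * N m))"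
  shows "\<forall>\<^sub>F m in sequentially.
    binomial_tail_regime (n1 m) (n2 m) (p m) (h m) ((real (n1 m) + real (n2 m)) * p m * (1 - p m))"
proof -
  have "\<forall>\<^sub>F m in sequentially. 50000 \<le> p m * (1 - p m) * N m"
    using var_inf unfolding filterlim_at_top by blast
  moreover have "\<forall>\<^sub>F m in sequentially. \<bar>h m\<bar> \<le> 1/100 * \<bar>(p m * (1 - p m) * N m) powr (2/3)\<bar>"
    using landau_o.smallD[OF h_upper, of "1/100"] by simp
  moreover have "\<forall>\<^sub>F m in sequentially.
      \<bar>h m * S m\<bar> \<le> 1/100 * \<bar>N m * sqrt (p m * (1 - p m) * N m)\<bar>"
    using landau_o.smallD[OF hS, of "1/100"] by simp
  ultimately show ?thesis
  proof eventually_elim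
    case (elim m)
    define V where "V = (real (n1 m) + real (n2 m)) * p m * (1 - p m)"
    have W: "p m * (1 - p m) * N m = V / 2" unfolding N_def V_def by (simp add: field_simps)
    have "0 \<le> V" using elim(1) W by simp
    show ?case unfolding V_def[symmetric]
    proof (rule binomial_tail_regimeI)
      show "0 \<le> p m" "p m \<le> 1" using p_range by auto
      show "V = (real (n1 m) + real (n2 m)) * p m * (1 - p m)" "100000 \<le> V"
        using elim(1) W by (simp_all add: V_def)
      have "2 * p m * (1 - p m) * N m = V" using W by (simp add: algebra_simps)
      then show "2 * sqrt V < h m" using h_lower by metis
      show "h m \<le> (V / 2) powr (2/3) / 100" using elim(2) W by simp
      show "\<bar>h m * (real (n2 m) - real (n1 m))\<bar> \<le> (real (n1 m) + real (n2 m)) * sqrt (V / 2) / 100"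
        using elim(3) \<open>0 \<le> V\<close> unfolding W by (simp add: N_def S_def abs_mult field_simps)
    qed
  qed
qed

theorem mainTheorem11:
  fixes n1 n2 :: "nat \<Rightarrow> nat" and p h :: "nat \<Rightarrow> real"
  defines "N \<equiv> (\<lambda>m. (real (n1 m) + real (n2 m)) / 2)"
      and "S \<equiv> (\<lambda>m. (real (n2 m) - real (n1 m)) / 2)"
  assumes N_inf: "filterlim N at_top sequentially"
      and p_range: "\<forall>m. 0 \<le> p m \<and> p m \<le> 1"
      and var_inf: "filterlim (\<lambda>m. p m * (1 - p m) * N m) at_top sequentially"
      and h_lower: "\<forall>m. 2 * sqrt (2 * p m * (1 - p m) * N m) < h m"
      and h_upper: "h \<in> o(\<lambda>m. (p m * (1 - p m) * N m) powr (2/3))"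
      and hS: "(\<lambda>m. h m * S m) \<in> o(\<lambda>m. N m * sqrt (p m * (1 - p m) * N m))"
  shows "\<exists>\<epsilon> :: nat \<Rightarrow> real. \<epsilon> \<longlonglongrightarrow> 0 \<and>
           (\<forall>\<^sub>F m in sequentially.
              binom_sum_tail (n1 m) (n2 m) (p m)
                 (real (n1 m) * p m + real (n2 m) * (1 - p m) + h m)
              > sqrt (2 * p m * (1 - p m) * N m) / (2 * pi * h m)
                * exp (- (h m)\<^sup>2 / (4 * p m * (1 - p m) * N m) - 4 - \<epsilon> m))"
proof (intro exI conjI)
  let ?V = "\<lambda>m. (real (n1 m) + real (n2 m)) * p m * (1 - p m)"
  have V: "2 * p m * (1 - p m) * N m = ?V m" "4 * p m * (1 - p m) * N m = 2 * ?V m" for m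
    unfolding N_def by (simp_all add: field_simps)
  show "(\<lambda>m. inverse (real (Suc m))) \<longlonglongrightarrow> 0" by (rule LIMSEQ_inverse_real_of_nat)
  show "\<forall>\<^sub>F m in sequentially.
      binom_sum_tail (n1 m) (n2 m) (p m) (real (n1 m) * p m + real (n2 m) * (1 - p m) + h m)
      > sqrt (2 * p m * (1 - p m) * N m) / (2 * pi * h m)
        * exp (- (h m)\<^sup>2 / (4 * p m * (1 - p m) * N m) - 4 - inverse (real (Suc m)))"
    using eventually_binomial_tail_regime[OF p_range var_inf[unfolded N_def] h_lower[unfolded N_def]
        h_upper[unfolded N_def] hS[unfolded N_def S_def]]
    unfolding V
    by eventually_elim (rule binomial_tail_regime.tail_lower_bound_strict, simp_all)
qed

end
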